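(* Let $n,m,r\in\mathbb{N}$, let $\Theta:=\mathbb{R}^{n\times r}\times\mathbb{R}^{r\times m}$, and let $g:\Theta\to\mathbb{R}$ be differentiable, with partial gradients $\nabla_B g(B,A)\in\mathbb{R}^{n\times r}$ and $\nabla_A g(B,A)\in\mathbb{R}^{r\times m}$. Fix $\lambda\in[0,1]$, $k\in\mathbb{N}$ and initial matrices $B_0\in\mathbb{R}^{n\times r}$, $A_0\in\mathbb{R}^{r\times m}$. For a step size $\alpha>0$, define the LoRA gradient-descent iterates $B^{(\alpha)}_0=B_0$, $A^{(\alpha)}_0=A_0$ and, for every $i\ge 0$ and $j\in\{0,\dots,k-1\}$, $$B^{(\alpha)}_{ik+j+1}=B^{(\alpha)}_{ik+j}-\alpha\,\nabla_B g\big(B^{(\alpha)}_{ik+j},A^{(\alpha)}_{ik}\big),$$ $$A^{(\alpha)}_{ik+j+1}=A^{(\alpha)}_{ik+j}-\alpha\,\nabla_A g\big(\lambda B^{(\alpha)}_{ik}+(1-\lambda)B^{(\alpha)}_{(i+1)k},\,A^{(\alpha)}_{ik+j}\big).$$ Define their affine interpolations, for $t\ge 0$, with $N(t):=\lfloor t/\alpha\rfloor$ and $h(t):=N(t)-(N(t)\bmod k)$, $$Y_\alpha(t)=B^{(\alpha)}_{N(t)}-\big(t-N(t)\alpha\big)\nabla_B g\big(B^{(\alpha)}_{N(t)},A^{(\alpha)}_{h(t)}\big),$$ $$X_\alpha(t)=A^{(\alpha)}_{N(t)}-\big(t-N(t)\alpha\big)\nabla_A g\big(\lambda B^{(\alpha)}_{h(t)}+(1-\lambda)B^{(\alpha)}_{h(t)+k},\,A^{(\alpha)}_{N(t)}\big).$$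 Assume: (i) the iterates are uniformly bounded, i.e. there is a constant $C$ with $\|B^{(\alpha)}_\ell\|\le C$ and $\|A^{(\alpha)}_\ell\|\le C$ for all $\alpha$ and all $\ell$; (ii) $\nabla g$ is bounded on bounded subsets of $\Theta$; (iii) $\nabla g$ is Lipschitz on bounded subsets of $\Theta$: for every $R>0$ there is $L_R>0$ such that $\|\nabla g(B_2,A_2)-\nabla g(B_1,A_1)\|\le L_R\|(B_2,A_2)-(B_1,A_1)\|$ whenever $\max(\|B_1\|,\|A_1\|,\|B_2\|,\|A_2\|)\le R$. Then the initial value problem $$Y'(t)=-\nabla_Y g\big(Y(t),X(t)\big),\quad X'(t)=-\nabla_X g\big(Y(t),X(t)\big),\quad Y(0)=B_0,\ X(0)=A_0$$ has a solution $(Y,X)$ on $[0,\infty)$, and for every $t\ge 0$, $$\lim_{\alpha\to 0}\|Y_\alpha(t)-Y(t)\|=0,\qquad \lim_{\alpha\to 0}\|X_\alpha(t)-X(t)\|=0.$$ In particular this holds for every $\lambda\in[0,1]$ and $k\in\mathbb{N}$, so the gradient-flow limit does not depend on whether the updates are simultaneous ($\lambda=1$) or sequential ($\lambda=0$).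
   Context: $\|\cdot\|$ denotes the Frobenius norm. On $\Theta$ the norm is the product norm $\|(B,A)\|=\sqrt{\|B\|^2+\|A\|^2}$ and $\nabla g(B,A)=(\nabla_B g(B,A),\nabla_A g(B,A))$, where $\nabla_B g$ is the matrix with entries $\partial g/\partial b_{ij}$ (similarly for $A$). In LoRA one takes $g(B,A)=f(W_0+BA)$ for a pretrained matrix $W_0\in\mathbb{R}^{n\times m}$. *)

theory Defs
  imports "HOL-Analysis.Analysis"
begin

text \<open>Matrices in R^(n x r) are modelled as real^'r^'n (rows indexed by 'n);
  the HOL-Analysis norm on this type is the Frobenius norm, and on the product
  type it is sqrt(norm B^2 + norm A^2). The gradient G of g is a map
  Theta => Theta; fst (G p) is the partial gradient in B, snd (G p) in A.\<close>

text \<open>k inner steps on B with A frozen: B_{ik+j} from B_{ik}.\<close>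
definition lora_blockB ::
  "('b \<times> 'a \<Rightarrow> 'b \<times> 'a) \<Rightarrow> real \<Rightarrow> 'b::real_vector \<Rightarrow> 'a::real_vector \<Rightarrow> nat \<Rightarrow> 'b" where
  "lora_blockB G \<alpha> b a j = ((\<lambda>x. x - \<alpha> *\<^sub>R fst (G (x, a))) ^^ j) b"

definition lora_blockA ::
  "('b \<times> 'a \<Rightarrow> 'b \<times> 'a) \<Rightarrow> real \<Rightarrow> 'b::real_vector \<Rightarrow> 'a::real_vector \<Rightarrow> nat \<Rightarrow> 'a" where
  "lora_blockA G \<alpha> bmix a j = ((\<lambda>y. y - \<alpha> *\<^sub>R snd (G (bmix, y))) ^^ j) a"

text \<open>Iterates at the block starts ik, i = 0,1,2,...\<close>
fun lora_anchor ::
  "('b \<times> 'a \<Rightarrow> 'b \<times> 'a) \<Rightarrow> real \<Rightarrow> nat \<Rightarrow> real \<Rightarrow> 'b::real_vector \<Rightarrow> 'a::real_vector \<Rightarrow> nat \<Rightarrow> 'b \<times> 'a" where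
  "lora_anchor G lam k \<alpha> B0 A0 0 = (B0, A0)"
| "lora_anchor G lam k \<alpha> B0 A0 (Suc i) =
     (let (b, a) = lora_anchor G lam k \<alpha> B0 A0 i;
          bk = lora_blockB G \<alpha> b a k
      in (bk, lora_blockA G \<alpha> (lam *\<^sub>R b + (1 - lam) *\<^sub>R bk) a k))"

definition lora_iter ::
  "('b \<times> 'a \<Rightarrow> 'b \<times> 'a) \<Rightarrow> real \<Rightarrow> nat \<Rightarrow> real \<Rightarrow> 'b::real_vector \<Rightarrow> 'a::real_vector \<Rightarrow> nat \<Rightarrow> 'b \<times> 'a" where
  "lora_iter G lam k \<alpha> B0 A0 l =
     (let (b, a) = lora_anchor G lam k \<alpha> B0 A0 (l div k);
          bk = lora_blockB G \<alpha> b a k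
      in (lora_blockB G \<alpha> b a (l mod k),
          lora_blockA G \<alpha> (lam *\<^sub>R b + (1 - lam) *\<^sub>R bk) a (l mod k)))"

definition lora_N :: "real \<Rightarrow> real \<Rightarrow> nat" where
  "lora_N \<alpha> t = nat \<lfloor>t / \<alpha>\<rfloor>"

definition lora_Y ::
  "('b \<times> 'a \<Rightarrow> 'b \<times> 'a) \<Rightarrow> real \<Rightarrow> nat \<Rightarrow> real \<Rightarrow> 'b::real_vector \<Rightarrow> 'a::real_vector \<Rightarrow> real \<Rightarrow> 'b" where
  "lora_Y G lam k \<alpha> B0 A0 t =
     (let N = lora_N \<alpha> t; h = N - N mod k;
          it = lora_iter G lam k \<alpha> B0 A0
      in fst (it N) - (t - real N * \<alpha>) *\<^sub>R fst (G (fst (it N), snd (it h))))"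

definition lora_X ::
  "('b \<times> 'a \<Rightarrow> 'b \<times> 'a) \<Rightarrow> real \<Rightarrow> nat \<Rightarrow> real \<Rightarrow> 'b::real_vector \<Rightarrow> 'a::real_vector \<Rightarrow> real \<Rightarrow> 'a" where
  "lora_X G lam k \<alpha> B0 A0 t =
     (let N = lora_N \<alpha> t; h = N - N mod k;
          it = lora_iter G lam k \<alpha> B0 A0
      in snd (it N) - (t - real N * \<alpha>) *\<^sub>R
           snd (G (lam *\<^sub>R fst (it h) + (1 - lam) *\<^sub>R fst (it (h + k)), snd (it N))))"

end

theory Submission
  imports Defs
begin

(* Together, Y_alpha and X_alpha form a piecewise linear curve z_alpha in Theta whose slope on
   [N alpha, (N+1) alpha] is minus a vector of partial gradients taken at points within O(k alpha)
   of z_alpha(N alpha): on the bounded region visited, each step moves the iterate by at most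
   alpha sup |grad g|. Hence the defect z_alpha(t+s) - z_alpha(t) + s grad g(z_alpha(t)) is
   O(s (s + alpha)), uniformly in alpha. A discrete Gronwall estimate on grids of mesh t/n shows that
   two curves with a common start and defects O(s (s + a)) and O(s (s + b)) differ at time t by
   O(exp(L t) t (a + b)). So z_alpha is Cauchy as alpha -> 0, the limit has defect O(s^2) and is
   therefore a solution of the gradient flow, and z_alpha converges to it at rate O(alpha);
   lambda and k only enter the constants. *)

lemma lora_N_bounds:
  assumes "0 \<le> t" "0 < \<alpha>"
  shows "real (lora_N \<alpha> t) * \<alpha> \<le> t" "t < (real (lora_N \<alpha> t) + 1) * \<alpha>"
proof -
  have "real (lora_N \<alpha> t) = of_int \<lfloor>t / \<alpha>\<rfloor>"
    using assms unfolding lora_N_def by simp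
  then show "real (lora_N \<alpha> t) * \<alpha> \<le> t" "t < (real (lora_N \<alpha> t) + 1) * \<alpha>"
    using assms by (simp_all add: pos_le_divide_eq[symmetric] pos_divide_less_eq[symmetric])
qed

lemma lora_N_eq:
  assumes "0 < \<alpha>" "real N * \<alpha> \<le> t" "t < (real N + 1) * \<alpha>"
  shows "lora_N \<alpha> t = N"
proof -
  have "\<lfloor>t / \<alpha>\<rfloor> = int N"
    using assms by (simp add: floor_eq_iff pos_le_divide_eq pos_divide_less_eq)
  then show ?thesis unfolding lora_N_def by simp
qed

lemma lora_N_le_ceiling:
  assumes "0 < \<alpha>" "t \<le> b"
  shows "lora_N \<alpha> t \<le> nat \<lceil>b / \<alpha>\<rceil>"
proof -
  have "t / \<alpha> \<le> b / \<alpha>" using assms by (simp add: divide_right_mono)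
  then have "\<lfloor>t / \<alpha>\<rfloor> \<le> \<lceil>b / \<alpha>\<rceil>" by (meson floor_le_ceiling floor_mono order_trans)
  then show ?thesis unfolding lora_N_def by (rule nat_mono)
qed

lemma norm_fst_le_norm: "norm (fst p) \<le> norm p"
  using norm_fst_le[of "fst p" "snd p"] by simp

lemma norm_snd_le_norm: "norm (snd p) \<le> norm p"
  using norm_snd_le[of "snd p" "fst p"] by simp

lemma has_vector_derivative_fst:
  "(f has_vector_derivative f') F \<Longrightarrow> ((\<lambda>x. fst (f x)) has_vector_derivative fst f') F"
  unfolding has_vector_derivative_def by (drule has_derivative_fst) simp

lemma has_vector_derivative_snd:
  "(f has_vector_derivative f') F \<Longrightarrow> ((\<lambda>x. snd (f x)) has_vector_derivative snd f') F"
  unfolding has_vector_derivative_def by (drule has_derivative_snd) simp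

lemma tendsto_norm_fst_zero: "((\<lambda>x. norm (f x)) \<longlongrightarrow> 0) F \<Longrightarrow> ((\<lambda>x. norm (fst (f x))) \<longlongrightarrow> 0) F"
  unfolding tendsto_norm_zero_iff using tendsto_fst by fastforce

lemma tendsto_norm_snd_zero: "((\<lambda>x. norm (f x)) \<longlongrightarrow> 0) F \<Longrightarrow> ((\<lambda>x. norm (snd (f x))) \<longlongrightarrow> 0) F"
  unfolding tendsto_norm_zero_iff using tendsto_snd by fastforce

lemma norm_diff_scaleR_le:
  assumes "norm x \<le> a" "norm y \<le> b" "0 \<le> \<tau>" "\<tau> \<le> 1" "0 \<le> b"
  shows "norm (x - \<tau> *\<^sub>R y) \<le> a + b"
proof -
  have "norm (x - \<tau> *\<^sub>R y) \<le> norm x + \<tau> * norm y"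
    using norm_triangle_ineq4[of x "\<tau> *\<^sub>R y"] assms(3) by simp
  also have "\<dots> \<le> a + 1 * b"
    using assms by (intro add_mono mult_mono) auto
  finally show ?thesis by simp
qed

section \<open>Piecewise linear curves\<close>

lemma continuous_on_piecewise_linear:
  fixes u :: "real \<Rightarrow> 'a::real_normed_vector" and D :: "nat \<Rightarrow> 'a"
  assumes "0 < \<alpha>"
    and piece: "\<And>N \<sigma>. real N * \<alpha> \<le> \<sigma> \<Longrightarrow> \<sigma> \<le> (real N + 1) * \<alpha> \<Longrightarrow>
        u \<sigma> = u (real N * \<alpha>) - (\<sigma> - real N * \<alpha>) *\<^sub>R D N"
  shows "continuous_on {0..b} u"
proof -
  define I where "I N = {real N * \<alpha> .. (real N + 1) * \<alpha>}" for N
  have "continuous_on (\<Union>N\<le>nat \<lceil>b / \<alpha>\<rceil>. I N) u"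
  proof (rule continuous_on_closed_Union)
    fix N
    have "continuous_on (I N) (\<lambda>\<sigma>. u (real N * \<alpha>) - (\<sigma> - real N * \<alpha>) *\<^sub>R D N)"
      by (intro continuous_intros)
    then show "continuous_on (I N) u"
      by (rule continuous_on_eq) (auto simp: I_def piece)
  qed (auto simp: I_def)
  moreover have "{0..b} \<subseteq> (\<Union>N\<le>nat \<lceil>b / \<alpha>\<rceil>. I N)"
  proof
    fix t assume "t \<in> {0..b}"
    then show "t \<in> (\<Union>N\<le>nat \<lceil>b / \<alpha>\<rceil>. I N)"
      using lora_N_bounds[of t \<alpha>] lora_N_le_ceiling[of \<alpha> t b] assms(1)
      by (auto simp: I_def intro!: bexI[of _ "lora_N \<alpha> t"])
  qed
  ultimately show ?thesis by (rule continuous_on_subset)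
qed

lemma has_vector_derivative_piecewise_linear:
  fixes u :: "real \<Rightarrow> 'a::real_normed_vector" and D :: "nat \<Rightarrow> 'a"
  assumes "0 < \<alpha>"
    and piece: "\<And>N \<sigma>. real N * \<alpha> \<le> \<sigma> \<Longrightarrow> \<sigma> \<le> (real N + 1) * \<alpha> \<Longrightarrow>
        u \<sigma> = u (real N * \<alpha>) - (\<sigma> - real N * \<alpha>) *\<^sub>R D N"
    and "0 \<le> t" "t \<noteq> real (lora_N \<alpha> t) * \<alpha>"
  shows "(u has_vector_derivative - D (lora_N \<alpha> t)) (at t)"
proof -
  let ?N = "lora_N \<alpha> t"
  let ?I = "{real ?N * \<alpha> <..< (real ?N + 1) * \<alpha>}"
  have "((\<lambda>\<sigma>. u (real ?N * \<alpha>) - (\<sigma> - real ?N * \<alpha>) *\<^sub>R D ?N) has_vector_derivative - D ?N) (at t)"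
    by (auto intro!: derivative_eq_intros)
  then show ?thesis
  proof (rule has_vector_derivative_transform_within_open)
    show "t \<in> ?I" using lora_N_bounds[of t \<alpha>] assms(1,3,4) by auto
    fix y assume "y \<in> ?I"
    then show "u (real ?N * \<alpha>) - (y - real ?N * \<alpha>) *\<^sub>R D ?N = u y"
      using piece[of ?N y] by simp
  qed simp
qed

lemma piecewise_linear_increment_bound:
  fixes u :: "real \<Rightarrow> 'a::banach" and D :: "nat \<Rightarrow> 'a"
  assumes "0 < \<alpha>"
    and piece: "\<And>N \<sigma>. real N * \<alpha> \<le> \<sigma> \<Longrightarrow> \<sigma> \<le> (real N + 1) * \<alpha> \<Longrightarrow>
        u \<sigma> = u (real N * \<alpha>) - (\<sigma> - real N * \<alpha>) *\<^sub>R D N"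
    and "0 \<le> a" "a \<le> b"
    and slope: "\<And>N. real N * \<alpha> \<le> b \<Longrightarrow> a \<le> (real N + 1) * \<alpha> \<Longrightarrow> norm (D N - w) \<le> E"
  shows "norm (u b - u a + (b - a) *\<^sub>R w) \<le> E * (b - a)"
proof -
  define \<phi> where "\<phi> = (\<lambda>\<sigma>. u \<sigma> + \<sigma> *\<^sub>R w)"
  define grid where "grid = (\<lambda>N. real N * \<alpha>) ` {..nat \<lceil>b / \<alpha>\<rceil>}"
  have "norm (D (lora_N \<alpha> a) - w) \<le> E"
    using lora_N_bounds[of a \<alpha>] assms(1,3,4) by (intro slope) auto
  then have "E \<ge> 0" by (rule order_trans[OF norm_ge_zero])
  have "continuous_on {a..b} \<phi>"
    unfolding \<phi>_def using continuous_on_piecewise_linear[OF assms(1,2), of b] assms(3)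
    by (intro continuous_intros) (auto elim: continuous_on_subset)
  moreover have "(\<phi> has_vector_derivative (w - D (lora_N \<alpha> t))) (at t)"
    if t: "t \<in> {a<..<b} - grid" for t
  proof -
    have "t \<noteq> real (lora_N \<alpha> t) * \<alpha>"
      using t lora_N_le_ceiling[of \<alpha> t b] assms(1) unfolding grid_def by auto
    then have "(u has_vector_derivative - D (lora_N \<alpha> t)) (at t)"
      using t assms(3) by (intro has_vector_derivative_piecewise_linear[OF assms(1) piece]) auto
    then show ?thesis unfolding \<phi>_def by (auto intro!: derivative_eq_intros)
  qed
  ultimately have "((\<lambda>t. w - D (lora_N \<alpha> t)) has_integral (\<phi> b - \<phi> a)) {a..b}"
    by (intro fundamental_theorem_of_calculus_interior_strong[of grid]) (auto simp: grid_def assms)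
  then have "norm (\<phi> b - \<phi> a) \<le> E * measure lborel (cbox a b)"
  proof (intro has_integral_bound[OF \<open>E \<ge> 0\<close>], simp)
    fix t assume "t \<in> cbox a b"
    then show "norm (w - D (lora_N \<alpha> t)) \<le> E"
      using slope lora_N_bounds[of t \<alpha>] assms(1,3) by (force simp: norm_minus_commute)
  qed
  then show ?thesis using assms(4) unfolding \<phi>_def by (simp add: algebra_simps)
qed

section \<open>Curves with small defect\<close>

lemma defect_stability_grid:
  fixes u v :: "real \<Rightarrow> 'a::real_normed_vector" and F :: "'a \<Rightarrow> 'a"
  assumes lip: "\<And>t. 0 \<le> t \<Longrightarrow> norm (F (u t) - F (v t)) \<le> L * norm (u t - v t)"
    and "0 \<le> L" "0 \<le> s"
    and defect_u: "\<And>t. 0 \<le> t \<Longrightarrow> norm (u (t + s) - u t + s *\<^sub>R F (u t)) \<le> e\<^sub>u"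
    and defect_v: "\<And>t. 0 \<le> t \<Longrightarrow> norm (v (t + s) - v t + s *\<^sub>R F (v t)) \<le> e\<^sub>v"
    and "u 0 = v 0"
  shows "norm (u (real i * s) - v (real i * s)) \<le> (1 + L * s) ^ i * (real i * (e\<^sub>u + e\<^sub>v))"
proof (induction i)
  case 0
  then show ?case using \<open>u 0 = v 0\<close> by simp
next
  case (Suc i)
  let ?t = "real i * s"
  let ?du = "u (?t + s) - u ?t + s *\<^sub>R F (u ?t)" and ?dv = "v (?t + s) - v ?t + s *\<^sub>R F (v ?t)"
  let ?e = "e\<^sub>u + e\<^sub>v" and ?q = "1 + L * s"
  have t: "0 \<le> ?t" using \<open>0 \<le> s\<close> by simp
  have "0 \<le> ?e"
    using order_trans[OF norm_ge_zero defect_u[of 0]] order_trans[OF norm_ge_zero defect_v[of 0]] by simp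
  have "?e \<le> ?q ^ Suc i * ?e"
    using mult_right_mono[OF one_le_power[of ?q "Suc i"] \<open>0 \<le> ?e\<close>] \<open>0 \<le> L\<close> \<open>0 \<le> s\<close> by simp
  have "u (?t + s) - v (?t + s) = (?du - ?dv) + ((u ?t - v ?t) - s *\<^sub>R (F (u ?t) - F (v ?t)))"
    by (simp add: algebra_simps)
  then have "norm (u (?t + s) - v (?t + s)) \<le>
      norm ?du + norm ?dv + (norm (u ?t - v ?t) + s * norm (F (u ?t) - F (v ?t)))"
    using norm_triangle_ineq[of "?du - ?dv"] norm_triangle_ineq4[of ?du ?dv]
      norm_triangle_ineq4[of "u ?t - v ?t" "s *\<^sub>R (F (u ?t) - F (v ?t))"] \<open>0 \<le> s\<close>
    by (smt (verit) norm_scaleR abs_of_nonneg)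
  also have "\<dots> \<le> ?e + (norm (u ?t - v ?t) + s * (L * norm (u ?t - v ?t)))"
    using defect_u[OF t] defect_v[OF t] lip[OF t] \<open>0 \<le> s\<close>
    by (intro add_mono mult_left_mono) auto
  also have "\<dots> = ?q * norm (u ?t - v ?t) + ?e" by (simp add: algebra_simps)
  also have "\<dots> \<le> ?q * (?q ^ i * (real i * ?e)) + ?q ^ Suc i * ?e"
    using Suc.IH \<open>?e \<le> ?q ^ Suc i * ?e\<close> \<open>0 \<le> L\<close> \<open>0 \<le> s\<close>
    by (intro add_mono mult_left_mono) auto
  also have "\<dots> = ?q ^ Suc i * (real (Suc i) * ?e)" by (simp add: algebra_simps)
  finally show ?case by (simp add: distrib_right add.commute)
qed

lemma defect_stability:
  fixes u v :: "real \<Rightarrow> 'a::real_normed_vector" and F :: "'a \<Rightarrow> 'a"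
  assumes lip: "\<And>t. 0 \<le> t \<Longrightarrow> norm (F (u t) - F (v t)) \<le> L * norm (u t - v t)"
    and "0 \<le> L" "0 \<le> K"
    and defect_u: "\<And>t s. 0 \<le> t \<Longrightarrow> 0 \<le> s \<Longrightarrow> norm (u (t + s) - u t + s *\<^sub>R F (u t)) \<le> K * s * (s + a)"
    and defect_v: "\<And>t s. 0 \<le> t \<Longrightarrow> 0 \<le> s \<Longrightarrow> norm (v (t + s) - v t + s *\<^sub>R F (v t)) \<le> K * s * (s + b)"
    and "u 0 = v 0" "0 \<le> t"
  shows "norm (u t - v t) \<le> exp (L * t) * K * t * (a + b)"
proof (rule LIMSEQ_le_const)
  let ?D = "exp (L * t) * K * t * 2 * t"
  show "(\<lambda>n. exp (L * t) * K * t * (a + b) + ?D / real n) \<longlonglongrightarrow> exp (L * t) * K * t * (a + b)"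
    using tendsto_add[OF tendsto_const lim_const_over_n] by simp
  show "\<exists>N. \<forall>n\<ge>N. norm (u t - v t) \<le> exp (L * t) * K * t * (a + b) + ?D / real n"
  proof (intro exI[of _ 1] allI impI)
    fix n :: nat assume "1 \<le> n"
    define s where "s = t / real n"
    have "0 \<le> s" "real n * s = t" using \<open>0 \<le> t\<close> \<open>1 \<le> n\<close> by (auto simp: s_def)
    have "(1 + L * s) ^ n \<le> exp (L * s) ^ n"
      using \<open>0 \<le> L\<close> \<open>0 \<le> s\<close> by (intro power_mono) (auto simp: exp_ge_add_one_self)
    also have "\<dots> = exp (L * t)"
      using \<open>real n * s = t\<close> by (simp add: exp_of_nat_mult[symmetric] algebra_simps)
    finally have growth: "(1 + L * s) ^ n \<le> exp (L * t)" .
    have "norm (u t - v t) \<le> (1 + L * s) ^ n * (real n * (K * s * (s + a) + K * s * (s + b)))"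
      using defect_stability_grid[OF lip \<open>0 \<le> L\<close> \<open>0 \<le> s\<close> defect_u defect_v \<open>u 0 = v 0\<close>, of n]
        \<open>0 \<le> s\<close> \<open>real n * s = t\<close> by simp
    also have "\<dots> \<le> exp (L * t) * (real n * (K * s * (s + a) + K * s * (s + b)))"
      using growth order_trans[OF norm_ge_zero defect_u[OF order_refl \<open>0 \<le> s\<close>]]
        order_trans[OF norm_ge_zero defect_v[OF order_refl \<open>0 \<le> s\<close>]]
      by (intro mult_right_mono) auto
    also have "\<dots> = exp (L * t) * K * t * (a + b) + ?D / real n"
      using \<open>1 \<le> n\<close> by (simp add: s_def field_simps)
    finally show "norm (u t - v t) \<le> exp (L * t) * K * t * (a + b) + ?D / real n" .
  qed
qed

lemma has_vector_derivative_of_quadratic_remainder: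
  fixes Z :: "real \<Rightarrow> 'a::real_normed_vector"
  assumes "0 \<le> C" and remainder: "\<And>y. y \<in> S \<Longrightarrow> norm (Z y - Z t - (y - t) *\<^sub>R Z') \<le> C * \<bar>y - t\<bar>\<^sup>2"
  shows "(Z has_vector_derivative Z') (at t within S)"
  unfolding has_vector_derivative_def has_derivative_within_alt
proof (intro conjI allI impI bounded_linear_scaleR_left)
  fix e :: real assume "0 < e"
  show "\<exists>d>0. \<forall>y\<in>S. norm (y - t) < d \<longrightarrow> norm (Z y - Z t - (y - t) *\<^sub>R Z') \<le> e * norm (y - t)"
  proof (intro exI[of _ "e / (C + 1)"] conjI ballI impI)
    show "0 < e / (C + 1)" using \<open>0 < e\<close> \<open>0 \<le> C\<close> by simp
    fix y :: real assume "y \<in> S" "norm (y - t) < e / (C + 1)"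
    then have "(C + 1) * \<bar>y - t\<bar> \<le> e"
      using \<open>0 \<le> C\<close> by (simp add: pos_less_divide_eq mult.commute)
    then have "C * \<bar>y - t\<bar> \<le> e" by (simp add: distrib_right)
    then have "C * \<bar>y - t\<bar>\<^sup>2 \<le> e * \<bar>y - t\<bar>"
      using mult_right_mono[of "C * \<bar>y - t\<bar>" e "\<bar>y - t\<bar>"] by (simp add: power2_eq_square mult.assoc)
    then show "norm (Z y - Z t - (y - t) *\<^sub>R Z') \<le> e * norm (y - t)"
      using remainder[OF \<open>y \<in> S\<close>] by simp
  qed
qed

lemma has_vector_derivative_of_quadratic_defect:
  fixes Z :: "real \<Rightarrow> 'a::real_normed_vector" and F :: "'a \<Rightarrow> 'a"
  assumes defect: "\<And>t s. 0 \<le> t \<Longrightarrow> 0 \<le> s \<Longrightarrow> norm (Z (t + s) - Z t + s *\<^sub>R F (Z t)) \<le> K * s\<^sup>2"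
    and lip: "L-lipschitz_on {0..} (\<lambda>t. F (Z t))"
    and "0 \<le> t"
  shows "(Z has_vector_derivative - F (Z t)) (at t within {0..})"
proof (rule has_vector_derivative_of_quadratic_remainder)
  have "0 \<le> K" using order_trans[OF norm_ge_zero defect[OF \<open>0 \<le> t\<close>, of 1]] by simp
  moreover have "0 \<le> L" using lip by (rule lipschitz_on_nonneg)
  ultimately show "0 \<le> K + L" by simp
  fix y :: real assume "y \<in> {0..}"
  show "norm (Z y - Z t - (y - t) *\<^sub>R - F (Z t)) \<le> (K + L) * \<bar>y - t\<bar>\<^sup>2"
  proof (cases "t \<le> y")
    case True
    then have "norm (Z y - Z t - (y - t) *\<^sub>R - F (Z t)) \<le> K * (y - t)\<^sup>2"
      using defect[OF \<open>0 \<le> t\<close>, of "y - t"] by simp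
    also have "\<dots> \<le> (K + L) * \<bar>y - t\<bar>\<^sup>2"
      unfolding power2_abs using \<open>0 \<le> L\<close> by (intro mult_right_mono) auto
    finally show ?thesis .
  next
    case False
    define s where "s = t - y"
    then have "0 \<le> s" "\<bar>y - t\<bar> = s" "y + s = t" using False by auto
    have split: "Z y - Z t - (y - t) *\<^sub>R - F (Z t) =
        s *\<^sub>R (F (Z y) - F (Z t)) - (Z t - Z y + s *\<^sub>R F (Z y))"
      by (simp add: s_def algebra_simps)
    have "norm (Z y - Z t - (y - t) *\<^sub>R - F (Z t)) \<le>
        norm (s *\<^sub>R (F (Z y) - F (Z t))) + norm (Z t - Z y + s *\<^sub>R F (Z y))"
      unfolding split by (rule norm_triangle_ineq4)
    also have "\<dots> \<le> s * (L * s) + K * s\<^sup>2"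
    proof (rule add_mono)
      show "norm (s *\<^sub>R (F (Z y) - F (Z t))) \<le> s * (L * s)"
        using lipschitz_on_normD[OF lip, of y t] \<open>0 \<le> t\<close> \<open>y \<in> {0..}\<close> \<open>0 \<le> s\<close> \<open>\<bar>y - t\<bar> = s\<close>
        by (simp add: mult_left_mono)
      show "norm (Z t - Z y + s *\<^sub>R F (Z y)) \<le> K * s\<^sup>2"
        using defect[of y s] \<open>y \<in> {0..}\<close> \<open>0 \<le> s\<close> \<open>y + s = t\<close> by simp
    qed
    also have "\<dots> = (K + L) * \<bar>y - t\<bar>\<^sup>2"
      by (simp add: \<open>\<bar>y - t\<bar> = s\<close> power2_eq_square algebra_simps)
    finally show ?thesis .
  qed
qed

section \<open>Limits of families of approximate solutions\<close>

locale flow_approximations =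
  fixes F :: "'a::banach \<Rightarrow> 'a" and u :: "real \<Rightarrow> real \<Rightarrow> 'a"
    and x0 :: 'a and S :: "'a set" and K L V :: real
  assumes closed: "closed S"
    and lipschitz: "L-lipschitz_on S F"
    and start: "\<And>\<alpha>. 0 < \<alpha> \<Longrightarrow> \<alpha> \<le> 1 \<Longrightarrow> u \<alpha> 0 = x0"
    and mem: "\<And>\<alpha> t. 0 < \<alpha> \<Longrightarrow> \<alpha> \<le> 1 \<Longrightarrow> 0 \<le> t \<Longrightarrow> u \<alpha> t \<in> S"
    and speed: "\<And>\<alpha>. 0 < \<alpha> \<Longrightarrow> \<alpha> \<le> 1 \<Longrightarrow> V-lipschitz_on {0..} (u \<alpha>)"
    and defect: "\<And>\<alpha> t s. 0 < \<alpha> \<Longrightarrow> \<alpha> \<le> 1 \<Longrightarrow> 0 \<le> t \<Longrightarrow> 0 \<le> s \<Longrightarrow>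
      norm (u \<alpha> (t + s) - u \<alpha> t + s *\<^sub>R F (u \<alpha> t)) \<le> K * s * (s + \<alpha>)"
begin

lemma K_nonneg: "0 \<le> K"
  using order_trans[OF norm_ge_zero defect[of 1 0 1]] by simp

lemma approximations_close:
  assumes "0 < \<alpha>" "\<alpha> \<le> 1" "0 < \<beta>" "\<beta> \<le> 1" "0 \<le> t"
  shows "norm (u \<alpha> t - u \<beta> t) \<le> exp (L * t) * K * t * (\<alpha> + \<beta>)"
proof (rule defect_stability[where F = F])
  show "norm (F (u \<alpha> t) - F (u \<beta> t)) \<le> L * norm (u \<alpha> t - u \<beta> t)" if "0 \<le> t" for t
    using lipschitz_on_normD[OF lipschitz] mem assms that by simp
  show "0 \<le> L" using lipschitz by (rule lipschitz_on_nonneg)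
qed (use assms K_nonneg defect start in auto)

abbreviation approx_seq :: "real \<Rightarrow> nat \<Rightarrow> 'a" where
  "approx_seq t n \<equiv> u (1 / Suc n) t"

lemma Cauchy_approx_seq:
  assumes "0 \<le> t"
  shows "Cauchy (approx_seq t)"
proof (rule metric_CauchyI)
  fix e :: real assume "0 < e"
  define c where "c = exp (L * t) * K * t"
  obtain N :: nat where N: "2 * c / e < real N" using reals_Archimedean2 by blast
  have "0 \<le> c" using K_nonneg assms unfolding c_def by simp
  have "dist (approx_seq t m) (approx_seq t n) < e" if "N \<le> m" "N \<le> n" for m n
  proof -
    have "dist (approx_seq t m) (approx_seq t n) \<le> c * (1 / Suc m + 1 / Suc n)"
      unfolding dist_norm c_def using assms by (intro approximations_close) auto
    also have "\<dots> \<le> c * (2 / Suc N)"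
    proof (intro mult_left_mono)
      have "1 / Suc m \<le> 1 / Suc N" "1 / Suc n \<le> 1 / Suc N"
        using that by (simp_all add: frac_le)
      then show "1 / Suc m + 1 / Suc n \<le> 2 / Suc N" by simp
    qed (fact \<open>0 \<le> c\<close>)
    also have "\<dots> < e"
      using N \<open>0 < e\<close> \<open>0 \<le> c\<close> by (simp add: field_simps)
    finally show ?thesis .
  qed
  then show "\<exists>N. \<forall>m\<ge>N. \<forall>n\<ge>N. dist (approx_seq t m) (approx_seq t n) < e" by blast
qed

definition limit_flow :: "real \<Rightarrow> 'a" where
  "limit_flow t = lim (approx_seq t)"

lemma approx_seq_tendsto: "0 \<le> t \<Longrightarrow> approx_seq t \<longlonglongrightarrow> limit_flow t"
  using Cauchy_convergent[OF Cauchy_approx_seq] unfolding limit_flow_def convergent_LIMSEQ_iff .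

lemma limit_flow_error:
  assumes "0 < \<alpha>" "\<alpha> \<le> 1" "0 \<le> t"
  shows "norm (u \<alpha> t - limit_flow t) \<le> exp (L * t) * K * t * \<alpha>"
proof (rule LIMSEQ_le)
  show "(\<lambda>n. norm (u \<alpha> t - approx_seq t n)) \<longlonglongrightarrow> norm (u \<alpha> t - limit_flow t)"
    using assms by (intro tendsto_intros approx_seq_tendsto)
  show "(\<lambda>n. exp (L * t) * K * t * (\<alpha> + 1 / Suc n)) \<longlonglongrightarrow> exp (L * t) * K * t * \<alpha>"
    using tendsto_mult_left[OF tendsto_add[OF tendsto_const LIMSEQ_Suc[OF lim_const_over_n]]]
    by simp
  show "\<exists>N. \<forall>n\<ge>N. norm (u \<alpha> t - approx_seq t n) \<le> exp (L * t) * K * t * (\<alpha> + 1 / Suc n)"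
    using assms by (auto intro!: approximations_close)
qed

lemma tendsto_limit_flow:
  assumes "0 \<le> t"
  shows "((\<lambda>\<alpha>. norm (u \<alpha> t - limit_flow t)) \<longlongrightarrow> 0) (at_right 0)"
proof (rule Lim_null_comparison)
  show "\<forall>\<^sub>F \<alpha> in at_right 0. norm (norm (u \<alpha> t - limit_flow t)) \<le> exp (L * t) * K * t * \<alpha>"
    using limit_flow_error assms by (auto simp: eventually_at_right_field intro!: exI[of _ 1])
  show "((\<lambda>\<alpha>. exp (L * t) * K * t * \<alpha>) \<longlongrightarrow> 0) (at_right 0)"
    by (auto intro!: tendsto_eq_intros)
qed

lemma limit_flow_start: "limit_flow 0 = x0"
  using limit_flow_error[of 1 0] start[of 1] by simp

lemma limit_flow_mem: "0 \<le> t \<Longrightarrow> limit_flow t \<in> S"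
  using closed mem by (auto intro!: closed_sequentially[OF _ _ approx_seq_tendsto])

lemma limit_flow_lipschitz: "V-lipschitz_on {0..} limit_flow"
proof (rule lipschitz_onI)
  show "0 \<le> V" using speed[of 1] by (simp add: lipschitz_on_nonneg)
  fix t t' :: real assume "t \<in> {0..}" "t' \<in> {0..}"
  moreover have "dist (approx_seq t n) (approx_seq t' n) \<le> V * dist t t'" for n
    using lipschitz_onD[OF speed[of "1 / Suc n"]] \<open>t \<in> {0..}\<close> \<open>t' \<in> {0..}\<close> by simp
  ultimately show "dist (limit_flow t) (limit_flow t') \<le> V * dist t t'"
    by (intro LIMSEQ_le_const2[OF tendsto_dist[OF approx_seq_tendsto approx_seq_tendsto]]) auto
qed

lemma limit_flow_defect:
  assumes "0 \<le> t" "0 \<le> s"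
  shows "norm (limit_flow (t + s) - limit_flow t + s *\<^sub>R F (limit_flow t)) \<le> K * s\<^sup>2"
proof (rule LIMSEQ_le)
  have "(\<lambda>n. F (approx_seq t n)) \<longlonglongrightarrow> F (limit_flow t)"
    using assms mem
    by (intro continuous_on_tendsto_compose[OF lipschitz_on_continuous_on[OF lipschitz]]
        approx_seq_tendsto limit_flow_mem) auto
  then show "(\<lambda>n. norm (approx_seq (t + s) n - approx_seq t n + s *\<^sub>R F (approx_seq t n)))
      \<longlonglongrightarrow> norm (limit_flow (t + s) - limit_flow t + s *\<^sub>R F (limit_flow t))"
    using assms by (intro tendsto_intros approx_seq_tendsto) auto
  show "(\<lambda>n. K * s * (s + 1 / Suc n)) \<longlonglongrightarrow> K * s\<^sup>2"
    using tendsto_mult_left[OF tendsto_add[OF tendsto_const LIMSEQ_Suc[OF lim_const_over_n]], of "K * s" s 1]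
    by (simp add: power2_eq_square mult.assoc)
  show "\<exists>N. \<forall>n\<ge>N. norm (approx_seq (t + s) n - approx_seq t n + s *\<^sub>R F (approx_seq t n))
      \<le> K * s * (s + 1 / Suc n)"
    using assms by (auto intro!: defect)
qed

lemma limit_flow_has_vector_derivative:
  assumes "0 \<le> t"
  shows "(limit_flow has_vector_derivative - F (limit_flow t)) (at t within {0..})"
proof (rule has_vector_derivative_of_quadratic_defect[OF limit_flow_defect _ assms])
  show "(L * V)-lipschitz_on {0..} (\<lambda>t. F (limit_flow t))"
    using limit_flow_mem
    by (intro lipschitz_on_compose2 limit_flow_lipschitz lipschitz_on_subset[OF lipschitz]) auto
qed

end

section \<open>The LoRA iteration\<close>

(* Step N reads z(N+1) = z(N) - alpha dir(N) (lemma lora_iter_Suc), with the two partial gradients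
   in dir(N) taken at the points below; N - N mod k is the start of the current block. *)

definition lora_eval_B ::
  "('b \<times> 'a \<Rightarrow> 'b \<times> 'a) \<Rightarrow> real \<Rightarrow> nat \<Rightarrow> real \<Rightarrow> 'b::real_vector \<Rightarrow> 'a::real_vector \<Rightarrow> nat \<Rightarrow> 'b \<times> 'a" where
  "lora_eval_B G lam k \<alpha> B0 A0 N =
     (fst (lora_iter G lam k \<alpha> B0 A0 N), snd (lora_iter G lam k \<alpha> B0 A0 (N - N mod k)))"

definition lora_eval_A ::
  "('b \<times> 'a \<Rightarrow> 'b \<times> 'a) \<Rightarrow> real \<Rightarrow> nat \<Rightarrow> real \<Rightarrow> 'b::real_vector \<Rightarrow> 'a::real_vector \<Rightarrow> nat \<Rightarrow> 'b \<times> 'a" where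
  "lora_eval_A G lam k \<alpha> B0 A0 N =
     (lam *\<^sub>R fst (lora_iter G lam k \<alpha> B0 A0 (N - N mod k))
        + (1 - lam) *\<^sub>R fst (lora_iter G lam k \<alpha> B0 A0 (N - N mod k + k)),
      snd (lora_iter G lam k \<alpha> B0 A0 N))"

definition lora_dir ::
  "('b \<times> 'a \<Rightarrow> 'b \<times> 'a) \<Rightarrow> real \<Rightarrow> nat \<Rightarrow> real \<Rightarrow> 'b::real_vector \<Rightarrow> 'a::real_vector \<Rightarrow> nat \<Rightarrow> 'b \<times> 'a" where
  "lora_dir G lam k \<alpha> B0 A0 N =
     (fst (G (lora_eval_B G lam k \<alpha> B0 A0 N)), snd (G (lora_eval_A G lam k \<alpha> B0 A0 N)))"

definition lora_interp ::
  "('b \<times> 'a \<Rightarrow> 'b \<times> 'a) \<Rightarrow> real \<Rightarrow> nat \<Rightarrow> real \<Rightarrow> 'b::real_vector \<Rightarrow> 'a::real_vector \<Rightarrow> real \<Rightarrow> 'b \<times> 'a" where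
  "lora_interp G lam k \<alpha> B0 A0 t = (lora_Y G lam k \<alpha> B0 A0 t, lora_X G lam k \<alpha> B0 A0 t)"

lemma lora_interp_eq:
  "lora_interp G lam k \<alpha> B0 A0 t =
   lora_iter G lam k \<alpha> B0 A0 (lora_N \<alpha> t) -
     (t - real (lora_N \<alpha> t) * \<alpha>) *\<^sub>R lora_dir G lam k \<alpha> B0 A0 (lora_N \<alpha> t)"
  by (simp add: lora_interp_def lora_Y_def lora_X_def lora_dir_def lora_eval_A_def lora_eval_B_def Let_def prod_eq_iff)

lemma lora_iter_0: "lora_iter G lam k \<alpha> B0 A0 0 = (B0, A0)"
  by (simp add: lora_iter_def lora_blockB_def lora_blockA_def)

lemma lora_blockB_Suc:
  "lora_blockB G \<alpha> b a (Suc j) = lora_blockB G \<alpha> b a j - \<alpha> *\<^sub>R fst (G (lora_blockB G \<alpha> b a j, a))"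
  by (simp add: lora_blockB_def)

lemma lora_blockA_Suc:
  "lora_blockA G \<alpha> b a (Suc j) = lora_blockA G \<alpha> b a j - \<alpha> *\<^sub>R snd (G (b, lora_blockA G \<alpha> b a j))"
  by (simp add: lora_blockA_def)

lemma lora_iter_mult:
  assumes "1 \<le> k"
  shows "lora_iter G lam k \<alpha> B0 A0 (i * k) = lora_anchor G lam k \<alpha> B0 A0 i"
  using assms by (simp add: lora_iter_def lora_blockB_def lora_blockA_def split: prod.split)

lemma lora_iter_Suc:
  assumes "1 \<le> k"
  shows "lora_iter G lam k \<alpha> B0 A0 (Suc N) =
    lora_iter G lam k \<alpha> B0 A0 N - \<alpha> *\<^sub>R lora_dir G lam k \<alpha> B0 A0 N"
proof -
  let ?z = "lora_iter G lam k \<alpha> B0 A0"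
  obtain b a where anchor: "lora_anchor G lam k \<alpha> B0 A0 (N div k) = (b, a)" by fastforce
  define mix where "mix = lam *\<^sub>R b + (1 - lam) *\<^sub>R lora_blockB G \<alpha> b a k"
  have next_anchor: "lora_anchor G lam k \<alpha> B0 A0 (Suc (N div k)) =
      (lora_blockB G \<alpha> b a k, lora_blockA G \<alpha> mix a k)"
    using anchor by (simp add: mix_def Let_def)
  have h: "N - N mod k = (N div k) * k" by (simp add: minus_mod_eq_mult_div mult.commute)
  then have h': "N - N mod k + k = Suc (N div k) * k" by simp
  have block_start: "?z (N - N mod k) = (b, a)"
    unfolding h lora_iter_mult[OF assms] by (rule anchor)
  have block_end: "?z (N - N mod k + k) = (lora_blockB G \<alpha> b a k, lora_blockA G \<alpha> mix a k)"
    unfolding h' lora_iter_mult[OF assms] by (rule next_anchor)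
  have zN: "?z N = (lora_blockB G \<alpha> b a (N mod k), lora_blockA G \<alpha> mix a (N mod k))"
    using anchor by (simp add: lora_iter_def mix_def)
  have dir: "lora_dir G lam k \<alpha> B0 A0 N =
      (fst (G (lora_blockB G \<alpha> b a (N mod k), a)), snd (G (mix, lora_blockA G \<alpha> mix a (N mod k))))"
    unfolding lora_dir_def lora_eval_A_def lora_eval_B_def Let_def block_start block_end zN
    by (simp add: mix_def)
  show ?thesis
  proof (cases "Suc (N mod k) = k")
    case True
    then have "Suc N div k = Suc (N div k)" "Suc N mod k = 0"
      using assms by (simp_all add: div_Suc mod_Suc)
    then have "?z (Suc N) = (lora_blockB G \<alpha> b a k, lora_blockA G \<alpha> mix a k)"
      using next_anchor by (simp add: lora_iter_def lora_blockB_def lora_blockA_def)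
    then show ?thesis
      unfolding zN dir
      using lora_blockB_Suc[of G \<alpha> b a "N mod k"] lora_blockA_Suc[of G \<alpha> mix a "N mod k"] True
      by simp
  next
    case False
    then have "Suc N div k = N div k" "Suc N mod k = Suc (N mod k)"
      using assms by (simp_all add: div_Suc mod_Suc)
    then have "?z (Suc N) = (lora_blockB G \<alpha> b a (Suc (N mod k)), lora_blockA G \<alpha> mix a (Suc (N mod k)))"
      using anchor by (simp add: lora_iter_def mix_def)
    then show ?thesis unfolding zN dir by (simp add: lora_blockA_Suc lora_blockB_Suc)
  qed
qed

lemma lipschitz_on_cball_Times:
  fixes G :: "'b::real_normed_vector \<times> 'a::real_normed_vector \<Rightarrow> 'b \<times> 'a"
  assumes "0 \<le> L" and lip: "\<forall>B1 A1 B2 A2.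
      max (max (norm B1) (norm A1)) (max (norm B2) (norm A2)) \<le> R \<longrightarrow>
      norm (G (B2, A2) - G (B1, A1)) \<le> L * norm ((B2, A2) - (B1, A1))"
  shows "L-lipschitz_on (cball 0 R \<times> cball 0 R) G"
proof (rule lipschitz_onI)
  fix p q :: "'b \<times> 'a" assume "p \<in> cball 0 R \<times> cball 0 R" "q \<in> cball 0 R \<times> cball 0 R"
  then show "dist (G p) (G q) \<le> L * dist p q"
    using lip[rule_format, of "fst q" "snd q" "fst p" "snd p"] by (simp add: dist_norm mem_Times_iff)
qed (fact \<open>0 \<le> L\<close>)

locale lora_bounds =
  fixes G :: "'b::banach \<times> 'a::banach \<Rightarrow> 'b \<times> 'a" and lam :: real and k :: nat
    and B0 :: 'b and A0 :: 'a and C M L :: real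
  assumes lam: "0 \<le> lam" "lam \<le> 1" and k: "1 \<le> k"
    and iter_mem: "\<And>\<alpha> l. 0 < \<alpha> \<Longrightarrow> lora_iter G lam k \<alpha> B0 A0 l \<in> cball 0 C \<times> cball 0 C"
    and grad_bound: "\<And>p. p \<in> cball 0 C \<times> cball 0 C \<Longrightarrow> norm (G p) \<le> M"
    and grad_lipschitz: "L-lipschitz_on (cball 0 (C + M) \<times> cball 0 (C + M)) G"
begin

abbreviation iter :: "real \<Rightarrow> nat \<Rightarrow> 'b \<times> 'a" where
  "iter \<alpha> \<equiv> lora_iter G lam k \<alpha> B0 A0"

abbreviation dir :: "real \<Rightarrow> nat \<Rightarrow> 'b \<times> 'a" where
  "dir \<alpha> \<equiv> lora_dir G lam k \<alpha> B0 A0"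

abbreviation interp :: "real \<Rightarrow> real \<Rightarrow> 'b \<times> 'a" where
  "interp \<alpha> \<equiv> lora_interp G lam k \<alpha> B0 A0"

lemma M_nonneg: "0 \<le> M"
  using grad_bound[OF iter_mem[of 1 0]] norm_ge_zero by (rule order_trans[rotated]) simp

lemma eval_mem:
  assumes "0 < \<alpha>"
  shows "lora_eval_B G lam k \<alpha> B0 A0 N \<in> cball 0 C \<times> cball 0 C"
    and "lora_eval_A G lam k \<alpha> B0 A0 N \<in> cball 0 C \<times> cball 0 C"
proof -
  let ?h = "N - N mod k"
  show "lora_eval_B G lam k \<alpha> B0 A0 N \<in> cball 0 C \<times> cball 0 C"
    using iter_mem[OF assms, of N] iter_mem[OF assms, of ?h]
    by (auto simp: lora_eval_B_def mem_Times_iff)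
  have "norm (lam *\<^sub>R fst (iter \<alpha> ?h) + (1 - lam) *\<^sub>R fst (iter \<alpha> (?h + k)))
      \<le> lam * norm (fst (iter \<alpha> ?h)) + (1 - lam) * norm (fst (iter \<alpha> (?h + k)))"
    using norm_triangle_ineq[of "lam *\<^sub>R fst (iter \<alpha> ?h)" "(1 - lam) *\<^sub>R fst (iter \<alpha> (?h + k))"] lam
    by simp
  also have "\<dots> \<le> lam * C + (1 - lam) * C"
    using iter_mem[OF assms, of ?h] iter_mem[OF assms, of "?h + k"] lam
    by (intro add_mono mult_left_mono) (auto simp: mem_Times_iff)
  finally show "lora_eval_A G lam k \<alpha> B0 A0 N \<in> cball 0 C \<times> cball 0 C"
    using iter_mem[OF assms, of N] by (auto simp: lora_eval_A_def mem_Times_iff algebra_simps)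
qed

lemma dir_bound:
  assumes "0 < \<alpha>"
  shows "norm (fst (dir \<alpha> N)) \<le> M" "norm (snd (dir \<alpha> N)) \<le> M" "norm (dir \<alpha> N) \<le> 2 * M"
proof -
  show "norm (fst (dir \<alpha> N)) \<le> M" "norm (snd (dir \<alpha> N)) \<le> M"
    using order_trans[OF norm_fst_le_norm grad_bound[OF eval_mem(1)[OF assms]]]
      order_trans[OF norm_snd_le_norm grad_bound[OF eval_mem(2)[OF assms]]]
    by (simp_all add: lora_dir_def)
  then show "norm (dir \<alpha> N) \<le> 2 * M"
    using norm_Pair_le[of "fst (dir \<alpha> N)" "snd (dir \<alpha> N)"] by simp
qed

lemma iter_drift:
  assumes "0 < \<alpha>" "l \<le> l'"
  shows "norm (iter \<alpha> l' - iter \<alpha> l) \<le> real (l' - l) * \<alpha> * (2 * M)"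
  using assms(2)
proof (induction l' rule: dec_induct)
  case base
  then show ?case by simp
next
  case (step l')
  have "norm (iter \<alpha> (Suc l') - iter \<alpha> l) \<le> norm (iter \<alpha> l' - iter \<alpha> l) + \<alpha> * norm (dir \<alpha> l')"
    using norm_triangle_ineq4[of "iter \<alpha> l' - iter \<alpha> l" "\<alpha> *\<^sub>R dir \<alpha> l'"] assms(1)
    by (simp add: lora_iter_Suc[OF k] algebra_simps)
  also have "\<dots> \<le> real (l' - l) * \<alpha> * (2 * M) + \<alpha> * (2 * M)"
    using step.IH dir_bound(3)[OF assms(1)] assms(1) by (intro add_mono mult_left_mono) auto
  also have "\<dots> = real (Suc l' - l) * \<alpha> * (2 * M)"
    using step.hyps by (simp add: Suc_diff_le algebra_simps)
  finally show ?case .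
qed

lemma iter_near_block:
  assumes "0 < \<alpha>" "N - N mod k \<le> l" "l \<le> N - N mod k + k"
  shows "norm (iter \<alpha> l - iter \<alpha> N) \<le> real k * \<alpha> * (2 * M)"
proof -
  have "N mod k < k" "N mod k \<le> N" using k by simp_all
  then have "max l N - min l N \<le> k" using assms(2,3) by (auto simp: max_def min_def)
  then have "real (max l N - min l N) * \<alpha> * (2 * M) \<le> real k * \<alpha> * (2 * M)"
    using assms(1) M_nonneg by (intro mult_right_mono) auto
  moreover have "norm (iter \<alpha> l - iter \<alpha> N) = norm (iter \<alpha> (max l N) - iter \<alpha> (min l N))"
    by (cases "l \<le> N") (simp_all add: max_def min_def norm_minus_commute)
  ultimately show ?thesis
    using order_trans[OF iter_drift[OF assms(1) min.cobounded1[THEN order_trans, OF max.cobounded1]]]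
    by simp
qed

lemma norm_eval_sub_iter:
  assumes "0 < \<alpha>"
  shows "norm (lora_eval_B G lam k \<alpha> B0 A0 N - iter \<alpha> N) \<le> real k * \<alpha> * (2 * M)"
    and "norm (lora_eval_A G lam k \<alpha> B0 A0 N - iter \<alpha> N) \<le> real k * \<alpha> * (2 * M)"
proof -
  let ?h = "N - N mod k"
  have "lora_eval_B G lam k \<alpha> B0 A0 N - iter \<alpha> N = (0, snd (iter \<alpha> ?h - iter \<alpha> N))"
    by (simp add: lora_eval_B_def prod_eq_iff)
  then have "norm (lora_eval_B G lam k \<alpha> B0 A0 N - iter \<alpha> N) = norm (snd (iter \<alpha> ?h - iter \<alpha> N))"
    by (simp add: norm_Pair)
  also have "\<dots> \<le> real k * \<alpha> * (2 * M)"
    by (rule order_trans[OF norm_snd_le_norm iter_near_block[OF assms]]) auto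
  finally show "norm (lora_eval_B G lam k \<alpha> B0 A0 N - iter \<alpha> N) \<le> real k * \<alpha> * (2 * M)" .
  have "lora_eval_A G lam k \<alpha> B0 A0 N - iter \<alpha> N
      = (lam *\<^sub>R fst (iter \<alpha> ?h - iter \<alpha> N) + (1 - lam) *\<^sub>R fst (iter \<alpha> (?h + k) - iter \<alpha> N), 0)"
    by (simp add: lora_eval_A_def prod_eq_iff algebra_simps)
  then have "norm (lora_eval_A G lam k \<alpha> B0 A0 N - iter \<alpha> N)
      = norm (lam *\<^sub>R fst (iter \<alpha> ?h - iter \<alpha> N) + (1 - lam) *\<^sub>R fst (iter \<alpha> (?h + k) - iter \<alpha> N))"
    by (simp add: norm_Pair)
  also have "\<dots> \<le> lam * norm (iter \<alpha> ?h - iter \<alpha> N) + (1 - lam) * norm (iter \<alpha> (?h + k) - iter \<alpha> N)"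
    using norm_triangle_ineq[of "lam *\<^sub>R fst (iter \<alpha> ?h - iter \<alpha> N)"] lam
      norm_fst_le_norm[of "iter \<alpha> ?h - iter \<alpha> N"] norm_fst_le_norm[of "iter \<alpha> (?h + k) - iter \<alpha> N"]
    by (smt (verit) mult_left_mono norm_scaleR abs_of_nonneg)
  also have "\<dots> \<le> lam * (real k * \<alpha> * (2 * M)) + (1 - lam) * (real k * \<alpha> * (2 * M))"
    using iter_near_block[OF assms, where l = ?h] iter_near_block[OF assms, where l = "?h + k"] lam
    by (intro add_mono mult_left_mono) auto
  finally show "norm (lora_eval_A G lam k \<alpha> B0 A0 N - iter \<alpha> N) \<le> real k * \<alpha> * (2 * M)"
    by (simp add: algebra_simps)
qed

lemma interp_eq:
  "interp \<alpha> t = iter \<alpha> (lora_N \<alpha> t) - (t - real (lora_N \<alpha> t) * \<alpha>) *\<^sub>R dir \<alpha> (lora_N \<alpha> t)"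
  by (rule lora_interp_eq)

lemma interp_grid:
  assumes "0 < \<alpha>"
  shows "interp \<alpha> (real N * \<alpha>) = iter \<alpha> N"
proof -
  have "lora_N \<alpha> (real N * \<alpha>) = N" using assms by (intro lora_N_eq) auto
  then show ?thesis by (simp add: interp_eq)
qed

lemma interp_piece:
  assumes "0 < \<alpha>" "real N * \<alpha> \<le> \<sigma>" "\<sigma> \<le> (real N + 1) * \<alpha>"
  shows "interp \<alpha> \<sigma> = interp \<alpha> (real N * \<alpha>) - (\<sigma> - real N * \<alpha>) *\<^sub>R dir \<alpha> N"
proof (cases "\<sigma> < (real N + 1) * \<alpha>")
  case True
  then have "lora_N \<alpha> \<sigma> = N" using assms by (intro lora_N_eq) auto
  then show ?thesis unfolding interp_grid[OF assms(1)] by (simp add: interp_eq)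
next
  case False
  then have "\<sigma> = real (Suc N) * \<alpha>" "\<sigma> - real N * \<alpha> = \<alpha>"
    using assms(3) by (simp_all add: algebra_simps)
  then have "interp \<alpha> \<sigma> = iter \<alpha> (Suc N)" by (simp only: interp_grid[OF assms(1)])
  then show ?thesis
    using \<open>\<sigma> - real N * \<alpha> = \<alpha>\<close> by (simp add: lora_iter_Suc[OF k] interp_grid[OF assms(1)])
qed

lemma interp_mem:
  assumes "0 < \<alpha>" "\<alpha> \<le> 1" "0 \<le> t"
  shows "interp \<alpha> t \<in> cball 0 (C + M) \<times> cball 0 (C + M)"
proof -
  let ?N = "lora_N \<alpha> t"
  define \<tau> where "\<tau> = t - real ?N * \<alpha>"
  have "0 \<le> \<tau>" "\<tau> \<le> 1"
    using lora_N_bounds[OF assms(3,1)] assms(2) unfolding \<tau>_def by (auto simp: algebra_simps)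
  then show ?thesis
    using iter_mem[OF assms(1), of ?N] dir_bound(1,2)[OF assms(1), of ?N] M_nonneg
    unfolding interp_eq \<tau>_def[symmetric]
    by (auto simp: mem_Times_iff intro!: norm_diff_scaleR_le)
qed

lemma interp_lipschitz:
  assumes "0 < \<alpha>"
  shows "(2 * M)-lipschitz_on {0..} (interp \<alpha>)"
proof (rule lipschitz_on_leI)
  fix a b :: real assume "a \<in> {0..}" "b \<in> {0..}" "a \<le> b"
  then have "norm (interp \<alpha> b - interp \<alpha> a + (b - a) *\<^sub>R 0) \<le> 2 * M * (b - a)"
    using dir_bound(3)[OF assms] interp_piece[OF assms]
    by (intro piecewise_linear_increment_bound[OF assms]) auto
  then show "dist (interp \<alpha> a) (interp \<alpha> b) \<le> 2 * M * dist a b"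
    using \<open>a \<le> b\<close> by (simp add: dist_norm norm_minus_commute[of "interp \<alpha> a"])
qed (simp add: M_nonneg)

lemma dir_near_grad:
  assumes "0 < \<alpha>" "\<alpha> \<le> 1" "0 \<le> t"
    and near: "norm (iter \<alpha> N - interp \<alpha> t) \<le> \<delta>"
  shows "norm (dir \<alpha> N - G (interp \<alpha> t)) \<le> 2 * L * (real k * \<alpha> * (2 * M) + \<delta>)"
proof -
  let ?x = "interp \<alpha> t"
  let ?pB = "lora_eval_B G lam k \<alpha> B0 A0 N" and ?pA = "lora_eval_A G lam k \<alpha> B0 A0 N"
  have box: "cball 0 C \<times> cball 0 C \<subseteq> cball 0 (C + M) \<times> cball 0 (C + M)"
    using M_nonneg by auto
  have "norm (G p - G ?x) \<le> L * (real k * \<alpha> * (2 * M) + \<delta>)"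
    if "p \<in> cball 0 C \<times> cball 0 C" "norm (p - iter \<alpha> N) \<le> real k * \<alpha> * (2 * M)" for p
  proof -
    have "p \<in> cball 0 (C + M) \<times> cball 0 (C + M)" using that(1) box by blast
    then have "norm (G p - G ?x) \<le> L * norm (p - ?x)"
      by (rule lipschitz_on_normD[OF grad_lipschitz _ interp_mem[OF assms(1-3)]])
    also have "\<dots> \<le> L * (real k * \<alpha> * (2 * M) + \<delta>)"
      using norm_diff_triangle_le[OF that(2) near] lipschitz_on_nonneg[OF grad_lipschitz]
      by (intro mult_left_mono) auto
    finally show ?thesis .
  qed
  note close = this[OF eval_mem(1)[OF assms(1)] norm_eval_sub_iter(1)[OF assms(1)]]
    this[OF eval_mem(2)[OF assms(1)] norm_eval_sub_iter(2)[OF assms(1)]]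
  have "dir \<alpha> N - G ?x = (fst (G ?pB - G ?x), snd (G ?pA - G ?x))"
    by (simp add: lora_dir_def prod_eq_iff)
  then have "norm (dir \<alpha> N - G ?x) \<le> norm (fst (G ?pB - G ?x)) + norm (snd (G ?pA - G ?x))"
    by (simp only: norm_Pair_le)
  also have "\<dots> \<le> norm (G ?pB - G ?x) + norm (G ?pA - G ?x)"
    by (intro add_mono norm_fst_le_norm norm_snd_le_norm)
  finally show ?thesis using close by simp
qed

lemma interp_defect:
  assumes "0 < \<alpha>" "\<alpha> \<le> 1" "0 \<le> t" "0 \<le> s"
  shows "norm (interp \<alpha> (t + s) - interp \<alpha> t + s *\<^sub>R G (interp \<alpha> t))
    \<le> 4 * L * M * (real k + 1) * s * (s + \<alpha>)"
proof -
  have "norm (dir \<alpha> N - G (interp \<alpha> t)) \<le> 2 * L * (real k * \<alpha> * (2 * M) + 2 * M * (s + \<alpha>))"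
    if "real N * \<alpha> \<le> t + s" "t \<le> (real N + 1) * \<alpha>" for N
  proof (rule dir_near_grad[OF assms(1-3)])
    have "norm (iter \<alpha> N - interp \<alpha> t) = dist (interp \<alpha> (real N * \<alpha>)) (interp \<alpha> t)"
      by (simp add: interp_grid[OF assms(1)] dist_norm)
    also have "\<dots> \<le> 2 * M * dist (real N * \<alpha>) t"
      using assms(1,3) by (intro lipschitz_onD[OF interp_lipschitz]) auto
    also have "\<dots> \<le> 2 * M * (s + \<alpha>)"
      using that assms(1,4) M_nonneg by (intro mult_left_mono) (auto simp: dist_real_def abs_le_iff algebra_simps)
    finally show "norm (iter \<alpha> N - interp \<alpha> t) \<le> 2 * M * (s + \<alpha>)" .
  qed
  then have "norm (interp \<alpha> (t + s) - interp \<alpha> t + ((t + s) - t) *\<^sub>R G (interp \<alpha> t))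
      \<le> 2 * L * (real k * \<alpha> * (2 * M) + 2 * M * (s + \<alpha>)) * ((t + s) - t)"
    using assms interp_piece[OF assms(1)] by (intro piecewise_linear_increment_bound[OF assms(1)]) auto
  also have "\<dots> \<le> 4 * L * M * (real k + 1) * s * (s + \<alpha>)"
  proof -
    have "real k * \<alpha> + (s + \<alpha>) \<le> (real k + 1) * (s + \<alpha>)"
      using assms by (simp add: algebra_simps)
    then have "4 * L * M * s * (real k * \<alpha> + (s + \<alpha>)) \<le> 4 * L * M * s * ((real k + 1) * (s + \<alpha>))"
      using lipschitz_on_nonneg[OF grad_lipschitz] M_nonneg assms(4) by (intro mult_left_mono) auto
    then show ?thesis by (simp add: algebra_simps)
  qed
  finally show ?thesis by simp
qed

lemma flow_approximations_interp:
  "flow_approximations G interp (B0, A0) (cball 0 (C + M) \<times> cball 0 (C + M))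
     (4 * L * M * (real k + 1)) L (2 * M)"
proof
  show "closed (cball 0 (C + M) \<times> cball (0::'a) (C + M))" by (intro closed_Times closed_cball)
  show "L-lipschitz_on (cball 0 (C + M) \<times> cball 0 (C + M)) G" by (rule grad_lipschitz)
  show "interp \<alpha> 0 = (B0, A0)" if "0 < \<alpha>" for \<alpha>
    using interp_grid[OF that, of 0] by (simp add: lora_iter_0)
  show "interp \<alpha> t \<in> cball 0 (C + M) \<times> cball 0 (C + M)" if "0 < \<alpha>" "\<alpha> \<le> 1" "0 \<le> t" for \<alpha> t
    by (rule interp_mem[OF that])
  show "(2 * M)-lipschitz_on {0..} (interp \<alpha>)" if "0 < \<alpha>" for \<alpha>
    by (rule interp_lipschitz[OF that])
  show "norm (interp \<alpha> (t + s) - interp \<alpha> t + s *\<^sub>R G (interp \<alpha> t))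
      \<le> 4 * L * M * (real k + 1) * s * (s + \<alpha>)"
    if "0 < \<alpha>" "\<alpha> \<le> 1" "0 \<le> t" "0 \<le> s" for \<alpha> t s
    by (rule interp_defect[OF that])
qed

lemma flow_limit_exists:
  "\<exists>Y X. Y 0 = B0 \<and> X 0 = A0 \<and>
     (\<forall>t\<ge>0. (Y has_vector_derivative - fst (G (Y t, X t))) (at t within {0..}) \<and>
             (X has_vector_derivative - snd (G (Y t, X t))) (at t within {0..})) \<and>
     (\<forall>t\<ge>0. ((\<lambda>\<alpha>. norm (lora_Y G lam k \<alpha> B0 A0 t - Y t)) \<longlongrightarrow> 0) (at_right 0) \<and>
             ((\<lambda>\<alpha>. norm (lora_X G lam k \<alpha> B0 A0 t - X t)) \<longlongrightarrow> 0) (at_right 0))"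
proof -
  interpret flow: flow_approximations G interp "(B0, A0)" "cball 0 (C + M) \<times> cball 0 (C + M)"
      "4 * L * M * (real k + 1)" L "2 * M"
    by (rule flow_approximations_interp)
  show ?thesis
  proof (intro exI[of _ "\<lambda>t. fst (flow.limit_flow t)"] exI[of _ "\<lambda>t. snd (flow.limit_flow t)"]
      conjI allI impI)
    fix t :: real assume "0 \<le> t"
    note flow.limit_flow_has_vector_derivative[OF this]
    then show "((\<lambda>t. fst (flow.limit_flow t)) has_vector_derivative
        - fst (G (fst (flow.limit_flow t), snd (flow.limit_flow t)))) (at t within {0..})"
      and "((\<lambda>t. snd (flow.limit_flow t)) has_vector_derivative
        - snd (G (fst (flow.limit_flow t), snd (flow.limit_flow t)))) (at t within {0..})"
      by (auto dest: has_vector_derivative_fst has_vector_derivative_snd)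
    note flow.tendsto_limit_flow[OF \<open>0 \<le> t\<close>]
    then show "((\<lambda>\<alpha>. norm (lora_Y G lam k \<alpha> B0 A0 t - fst (flow.limit_flow t))) \<longlongrightarrow> 0) (at_right 0)"
      and "((\<lambda>\<alpha>. norm (lora_X G lam k \<alpha> B0 A0 t - snd (flow.limit_flow t))) \<longlongrightarrow> 0) (at_right 0)"
      by (auto dest: tendsto_norm_fst_zero tendsto_norm_snd_zero simp: lora_interp_def)
  qed (simp_all add: flow.limit_flow_start)
qed

end

theorem theorem2p4:
  fixes g :: "(real^'r^'n) \<times> (real^'m^'r) \<Rightarrow> real"
    and G :: "(real^'r^'n) \<times> (real^'m^'r) \<Rightarrow> (real^'r^'n) \<times> (real^'m^'r)"
    and lam :: real and k :: nat
    and B0 :: "real^'r^'n" and A0 :: "real^'m^'r"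
  assumes grad: "\<And>p. (g has_derivative (\<lambda>h. G p \<bullet> h)) (at p)"
    and lam: "0 \<le> lam" "lam \<le> 1"
    and k: "k \<ge> 1"
    and unif_bdd: "\<exists>C. \<forall>\<alpha>>0. \<forall>l.
         norm (fst (lora_iter G lam k \<alpha> B0 A0 l)) \<le> C \<and>
         norm (snd (lora_iter G lam k \<alpha> B0 A0 l)) \<le> C"
    and grad_bdd: "\<And>S. bounded S \<Longrightarrow> bounded (G ` S)"
    and grad_lip: "\<And>R. R > 0 \<Longrightarrow> \<exists>L>0. \<forall>B1 A1 B2 A2.
         max (max (norm B1) (norm A1)) (max (norm B2) (norm A2)) \<le> R \<longrightarrow>
         norm (G (B2, A2) - G (B1, A1)) \<le> L * norm ((B2, A2) - (B1, A1))"
  shows "\<exists>Y X. Y 0 = B0 \<and> X 0 = A0 \<and>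
     (\<forall>t\<ge>0. (Y has_vector_derivative - fst (G (Y t, X t))) (at t within {0..}) \<and>
             (X has_vector_derivative - snd (G (Y t, X t))) (at t within {0..})) \<and>
     (\<forall>t\<ge>0. ((\<lambda>\<alpha>. norm (lora_Y G lam k \<alpha> B0 A0 t - Y t)) \<longlongrightarrow> 0) (at_right 0) \<and>
             ((\<lambda>\<alpha>. norm (lora_X G lam k \<alpha> B0 A0 t - X t)) \<longlongrightarrow> 0) (at_right 0))"
proof -
  obtain C where C: "\<And>\<alpha> l. 0 < \<alpha> \<Longrightarrow> lora_iter G lam k \<alpha> B0 A0 l \<in> cball 0 C \<times> cball 0 C"
    using unif_bdd by (auto simp: mem_Times_iff)
  have "0 \<le> C" using C[of 1 0] by (auto simp: mem_Times_iff elim: order_trans[OF norm_ge_zero])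
  have "bounded (G ` (cball 0 C \<times> cball 0 C))" by (intro grad_bdd bounded_Times bounded_cball)
  then obtain M where "0 < M" and M: "\<And>p. p \<in> cball 0 C \<times> cball 0 C \<Longrightarrow> norm (G p) \<le> M"
    unfolding bounded_pos by blast
  obtain L where "0 < L" and "\<forall>B1 A1 B2 A2.
      max (max (norm B1) (norm A1)) (max (norm B2) (norm A2)) \<le> C + M \<longrightarrow>
      norm (G (B2, A2) - G (B1, A1)) \<le> L * norm ((B2, A2) - (B1, A1))"
    using grad_lip[of "C + M"] \<open>0 \<le> C\<close> \<open>0 < M\<close> by auto
  then have "L-lipschitz_on (cball 0 (C + M) \<times> cball 0 (C + M)) G"
    by (intro lipschitz_on_cball_Times) auto
  with lam k C M have "lora_bounds G lam k B0 A0 C M L" by unfold_locales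
  then show ?thesis by (rule lora_bounds.flow_limit_exists)
qed

end
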